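(* Let $n\ge1$, let $r$ be an integer with $(n+1)/2<r\le n$, and let $\alpha\in(0,1/2)$. Let $\theta\in\mathbb{R}^n$ and let $T_1,\dots,T_n$ be independent with $T_i\sim N(\theta_i,1)$; let $T_{(1)}\le\dots\le T_{(n)}$ be their order statistics. Let $\Phi$ be the standard normal cumulative distribution function and $t=\Phi^{-1}\{1-\alpha/(n-r+1)\}$. Let $n^+(\theta)=|\{i:\theta_i>0\}|$ and $n^-(\theta)=|\{i:\theta_i<0\}|$. Then $$\sup_{\theta\in\mathbb{R}^n:\ n^+(\theta)\ge r}\Pr_\theta\big(T_{(r)}<-t\big)\le\alpha\qquad\text{and}\qquad \sup_{\theta\in\mathbb{R}^n:\ n^-(\theta)\ge r}\Pr_\theta\big(T_{(n-r+1)}>t\big)\le\alpha.$$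
   Context: This is Type III (wrong sign) error control for the directional replicability test that rejects "$n^+<r$ and $n^-<r$" when $\min\{(n-r+1)p_{(r)},(n-r+1)q_{(r)}\}\le\alpha$, where $p_i=1-\Phi(T_i)$, $q_i=\Phi(T_i)$; the event $T_{(r)}\le -t$ is equivalent to $(n-r+1)q_{(r)}\le\alpha$ (declaring a negative replicated effect) and $T_{(n-r+1)}\ge t$ is equivalent to $(n-r+1)p_{(r)}\le\alpha$ (declaring a positive replicated effect). *)

theory Defs
  imports "HOL-Probability.Probability"
begin

definition Phi :: "real \<Rightarrow> real" where
  "Phi x = measure (density lborel std_normal_density) {..x}"

definition Phi_inv :: "real \<Rightarrow> real" where
  "Phi_inv p = (THE t. Phi t = p)"

definition T_law :: "nat \<Rightarrow> (nat \<Rightarrow> real) \<Rightarrow> (nat \<Rightarrow> real) measure" where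
  "T_law n \<theta> = PiM {..<n} (\<lambda>i. density lborel (normal_density (\<theta> i) 1))"

text \<open>r-th order statistic (1-based) of x 0, ..., x (n-1).\<close>
definition ord_stat :: "nat \<Rightarrow> nat \<Rightarrow> (nat \<Rightarrow> real) \<Rightarrow> real" where
  "ord_stat n r x = sort (map x [0..<n]) ! (r - 1)"

definition n_pos :: "nat \<Rightarrow> (nat \<Rightarrow> real) \<Rightarrow> nat" where
  "n_pos n \<theta> = card {i. i < n \<and> \<theta> i > 0}"

definition n_neg :: "nat \<Rightarrow> (nat \<Rightarrow> real) \<Rightarrow> nat" where
  "n_neg n \<theta> = card {i. i < n \<and> \<theta> i < 0}"

end

theory Submission
  imports Defs
begin

text \<open>A union bound. As \<open>2r > n + 1\<close>, the number \<open>k = n - r + 1\<close> is at most \<open>r\<close>, so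
  when \<open>n\<^sup>+(\<theta>) \<ge> r\<close> we may fix \<open>k\<close> coordinates with positive mean. If the \<open>r\<close>-th order
  statistic is below \<open>-t\<close>, then at least \<open>r\<close> of the \<open>T\<^sub>i\<close> are, and since \<open>k + r > n\<close> one
  of the fixed coordinates is. Each of these \<open>k\<close> events has probability
  \<open>\<Phi>(-t - \<theta>\<^sub>i) \<le> 1 - \<Phi>(t) = \<alpha>/k\<close>. The upper tail is symmetric.\<close>

abbreviation normal_measure :: "real \<Rightarrow> real \<Rightarrow> real measure" where
  "normal_measure \<mu> \<sigma> \<equiv> density lborel (normal_density \<mu> \<sigma>)"

lemma prob_space_normal_measure: "0 < \<sigma> \<Longrightarrow> prob_space (normal_measure \<mu> \<sigma>)"
  using prob_space_normal_density by simp

lemma distr_normal_measure_affine: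
  assumes "0 < \<sigma>" "a \<noteq> 0"
  shows "distr (normal_measure \<mu> \<sigma>) lborel (\<lambda>x. b + a * x)
    = normal_measure (b + a * \<mu>) (\<bar>a\<bar> * \<sigma>)"
proof -
  interpret prob_space "normal_measure \<mu> \<sigma>"
    using assms(1) by (rule prob_space_normal_measure)
  have "distributed (normal_measure \<mu> \<sigma>) lborel (\<lambda>x. x) (normal_density \<mu> \<sigma>)"
    by (simp add: distributed_def distr_id2 cong: distr_cong)
  from normal_density_affine[OF this assms]
  show ?thesis by (simp add: distributed_def)
qed

lemma measure_normal_measure_affine_vimage:
  assumes "0 < \<sigma>" "a \<noteq> 0" "A \<in> sets borel"
  shows "measure (normal_measure \<mu> \<sigma>) ((\<lambda>x. b + a * x) -` A)
    = measure (normal_measure (b + a * \<mu>) (\<bar>a\<bar> * \<sigma>)) A"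
  using measure_distr[of "\<lambda>x. b + a * x" "normal_measure \<mu> \<sigma>" lborel A] assms
  by (simp add: distr_normal_measure_affine)

lemma measure_normal_measure_atMost:
  assumes "0 < \<sigma>"
  shows "measure (normal_measure \<mu> \<sigma>) {..a} = Phi ((a - \<mu>) / \<sigma>)"
proof -
  have "(\<lambda>x. - \<mu> / \<sigma> + (1 / \<sigma>) * x) -` {..(a - \<mu>) / \<sigma>} = {..a}"
    using assms by (auto simp: field_simps)
  then show ?thesis
    using assms measure_normal_measure_affine_vimage
      [of \<sigma> "1 / \<sigma>" "{..(a - \<mu>) / \<sigma>}" \<mu> "- \<mu> / \<sigma>"]
    by (simp add: Phi_def)
qed

lemma measure_normal_measure_greaterThan:
  assumes "0 < \<sigma>"
  shows "measure (normal_measure \<mu> \<sigma>) {a<..} = 1 - Phi ((a - \<mu>) / \<sigma>)"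
proof -
  interpret prob_space "normal_measure \<mu> \<sigma>"
    using assms by (rule prob_space_normal_measure)
  have "{a<..} = space (normal_measure \<mu> \<sigma>) - {..a}" by auto
  then show ?thesis
    using prob_compl[of "{..a}"] measure_normal_measure_atMost[OF assms] by simp
qed

lemma measure_normal_measure_lessThan:
  assumes "0 < \<sigma>"
  shows "measure (normal_measure \<mu> \<sigma>) {..<a} = 1 - Phi ((\<mu> - a) / \<sigma>)"
proof -
  have "(\<lambda>x. 0 + -1 * x) -` {-a<..} = {..<a}" by auto
  then show ?thesis
    using measure_normal_measure_affine_vimage[of \<sigma> "-1" "{-a<..}" \<mu> 0] assms
    by (simp add: measure_normal_measure_greaterThan)
qed

lemma real_distribution_std_normal: "real_distribution (normal_measure 0 1)"
  by (simp add: real_distribution_def real_distribution_axioms_def prob_space_normal_measure)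

lemma Phi_eq_cdf: "Phi = cdf (normal_measure 0 1)"
  by (simp add: fun_eq_iff Phi_def cdf_def)

lemma Phi_mono: "x \<le> y \<Longrightarrow> Phi x \<le> Phi y"
proof -
  interpret real_distribution "normal_measure 0 1"
    by (rule real_distribution_std_normal)
  show "x \<le> y \<Longrightarrow> Phi x \<le> Phi y"
    unfolding Phi_eq_cdf by (rule cdf_nondecreasing)
qed

lemma isCont_Phi: "isCont Phi x"
proof -
  interpret real_distribution "normal_measure 0 1"
    by (rule real_distribution_std_normal)
  have "emeasure (normal_measure 0 1) {x} = 0"
    by (simp add: emeasure_density)
  then show ?thesis
    unfolding Phi_eq_cdf isCont_cdf by (simp add: measure_def)
qed

lemma Phi_strict_mono:
  assumes "a < b"
  shows "Phi a < Phi b"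
proof -
  interpret real_distribution "normal_measure 0 1"
    by (rule real_distribution_std_normal)
  have "ennreal (std_normal_density x) \<noteq> 0" for x
    using normal_density_pos[OF zero_less_one, of 0 x] by simp
  then have "{x. ennreal (std_normal_density x) * indicator {a<..b} x \<noteq> 0} = {a<..b}"
    by (auto simp: indicator_def)
  then have "(\<integral>\<^sup>+x. ennreal (std_normal_density x) * indicator {a<..b} x \<partial>lborel) \<noteq> 0"
    using assms by (subst nn_integral_0_iff) auto
  then have "emeasure (normal_measure 0 1) {a<..b} \<noteq> 0"
    by (simp add: emeasure_density)
  then have "0 < measure (normal_measure 0 1) {a<..b}"
    by (simp add: emeasure_eq_measure zero_less_measure_iff)
  then show ?thesis
    unfolding Phi_eq_cdf using cdf_diff_eq[OF assms] by simp
qed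

lemma Phi_Phi_inv:
  assumes "0 < p" "p < 1"
  shows "Phi (Phi_inv p) = p"
proof -
  interpret real_distribution "normal_measure 0 1"
    by (rule real_distribution_std_normal)
  have "eventually (\<lambda>x. Phi x < p) at_bot"
    using order_tendstoD(2)[OF cdf_lim_at_bot assms(1)] by (simp add: Phi_eq_cdf)
  then obtain a where a: "Phi a < p"
    by (auto simp: eventually_at_bot_linorder)
  have "eventually (\<lambda>x. p < Phi x) at_top"
    using order_tendstoD(1)[OF cdf_lim_at_top_prob assms(2)] by (simp add: Phi_eq_cdf)
  then obtain b where b: "p < Phi b"
    by (auto simp: eventually_at_top_linorder)
  have "a \<le> b"
    using a b Phi_mono[of b a] by fastforce
  then obtain x where x: "Phi x = p"
    using IVT'[of Phi a p b] a b isCont_Phi by (auto intro: continuous_at_imp_continuous_on)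
  have "Phi_inv p = x"
    unfolding Phi_inv_def
  proof (rule the_equality)
    fix y
    assume "Phi y = p"
    with x show "y = x"
      using Phi_strict_mono[of x y] Phi_strict_mono[of y x]
      by (cases x y rule: linorder_cases) auto
  qed (fact x)
  with x show ?thesis by simp
qed

lemma measure_PiM_Collect_single:
  assumes "\<And>i. i \<in> I \<Longrightarrow> prob_space (M i)" "i \<in> I" "A \<in> sets (M i)"
  shows "measure (PiM I M) {x \<in> space (PiM I M). x i \<in> A} = measure (M i) A"
proof -
  have "(\<lambda>x. x i) -` A \<inter> space (PiM I M) = {x \<in> space (PiM I M). x i \<in> A}"
    by auto
  moreover have "distr (PiM I M) (M i) (\<lambda>x. x i) = M i"
    using assms(1,2) by (rule distr_PiM_component)
  ultimately show ?thesis
    using measure_distr[OF measurable_component_singleton[OF assms(2), of M] assms(3)] by simp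
qed

lemma measure_PiM_le_sum_coordinate_events:
  assumes M: "\<And>i. i \<in> I \<Longrightarrow> prob_space (M i)"
    and S: "finite S" "S \<subseteq> I" and A: "\<And>i. i \<in> S \<Longrightarrow> A i \<in> sets (M i)"
    and E: "E \<subseteq> {x \<in> space (PiM I M). \<exists>i\<in>S. x i \<in> A i}"
  shows "measure (PiM I M) E \<le> (\<Sum>i\<in>S. measure (M i) (A i))"
proof -
  interpret prob_space "PiM I M"
    using M by (rule prob_space_PiM)
  let ?C = "\<lambda>i. {x \<in> space (PiM I M). x i \<in> A i}"
  have C: "?C i \<in> sets (PiM I M)" if "i \<in> S" for i
    using A[OF that] S that by (intro sets_Collect_single) auto
  have "E \<subseteq> (\<Union>i\<in>S. ?C i)"
    using E by blast
  then have "measure (PiM I M) E \<le> measure (PiM I M) (\<Union>i\<in>S. ?C i)"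
    using C S by (intro finite_measure_mono) auto
  also have "\<dots> \<le> (\<Sum>i\<in>S. measure (PiM I M) (?C i))"
    using C S by (intro finite_measure_subadditive_finite) auto
  also have "\<dots> = (\<Sum>i\<in>S. measure (M i) (A i))"
    using M S A by (intro sum.cong refl measure_PiM_Collect_single) auto
  finally show ?thesis .
qed

lemma le_sorted_nth:
  fixes xs :: "'a :: linorder list"
  assumes "sorted xs" "j < length xs" "length (filter (\<lambda>y. y < c) xs) \<le> j"
  shows "c \<le> xs ! j"
proof (rule ccontr)
  assume "\<not> c \<le> xs ! j"
  then have "\<forall>i\<le>j. xs ! i < c"
    using assms(1,2) by (meson le_less_trans not_le sorted_nth_mono)
  then have "{..j} \<subseteq> {i. i < length xs \<and> xs ! i < c}"
    using assms(2) by auto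
  then have "card {..j} \<le> card {i. i < length xs \<and> xs ! i < c}"
    by (intro card_mono) auto
  then show False
    using assms(3) by (simp add: length_filter_conv_card)
qed

lemma sorted_nth_le:
  fixes xs :: "'a :: linorder list"
  assumes "sorted xs" "j < length xs" "length (filter (\<lambda>y. c < y) xs) + j < length xs"
  shows "xs ! j \<le> c"
proof (rule ccontr)
  assume "\<not> xs ! j \<le> c"
  then have "\<forall>i. j \<le> i \<and> i < length xs \<longrightarrow> c < xs ! i"
    using assms(1,2) by (meson less_le_trans not_le sorted_nth_mono)
  then have "{j..<length xs} \<subseteq> {i. i < length xs \<and> c < xs ! i}"
    by auto
  then have "card {j..<length xs} \<le> card {i. i < length xs \<and> c < xs ! i}"
    by (intro card_mono) auto
  then show False
    using assms(3) by (simp add: length_filter_conv_card)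
qed

lemma length_filter_sort_map_upt:
  "length (filter P (sort (map x [0..<n]))) = card {i. i < n \<and> P (x i)}"
  by (simp add: filter_sort length_filter_conv_card cong: conj_cong)

lemma ord_stat_less_imp_ex:
  assumes "1 \<le> r" "r \<le> n" "S \<subseteq> {..<n}" "n < card S + r" "ord_stat n r x < c"
  shows "\<exists>i\<in>S. x i < c"
proof (rule ccontr)
  assume "\<not> (\<exists>i\<in>S. x i < c)"
  then have "{i. i < n \<and> x i < c} \<subseteq> {..<n} - S"
    by auto
  then have "card {i. i < n \<and> x i < c} \<le> n - card S"
    using card_mono[of "{..<n} - S"] card_Diff_subset[of S "{..<n}"] assms(3)
    by (simp add: finite_subset)
  then have "c \<le> ord_stat n r x"
    unfolding ord_stat_def using assms(1,2,4)
    by (intro le_sorted_nth) (auto simp: length_filter_sort_map_upt)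
  with assms(5) show False
    by simp
qed

lemma ord_stat_greater_imp_ex:
  assumes "1 \<le> r" "r \<le> n" "S \<subseteq> {..<n}" "r \<le> card S" "c < ord_stat n r x"
  shows "\<exists>i\<in>S. c < x i"
proof (rule ccontr)
  assume "\<not> (\<exists>i\<in>S. c < x i)"
  then have "{i. i < n \<and> c < x i} \<subseteq> {..<n} - S"
    by auto
  then have "card {i. i < n \<and> c < x i} \<le> n - card S"
    using card_mono[of "{..<n} - S"] card_Diff_subset[of S "{..<n}"] assms(3)
    by (simp add: finite_subset)
  then have "ord_stat n r x \<le> c"
    unfolding ord_stat_def using assms(1-4) card_mono[OF _ assms(3)]
    by (intro sorted_nth_le) (auto simp: length_filter_sort_map_upt)
  with assms(5) show False
    by simp
qed

lemma ord_stat_lower_tail_le: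
  assumes "1 \<le> r" "r \<le> n" "n - r + 1 \<le> n_pos n \<theta>"
  shows "measure (T_law n \<theta>) {x \<in> space (T_law n \<theta>). ord_stat n r x < c}
    \<le> real (n - r + 1) * (1 - Phi (- c))"
proof -
  obtain S where S: "S \<subseteq> {i. i < n \<and> 0 < \<theta> i}" "card S = n - r + 1"
    using assms(3) obtain_subset_with_card_n unfolding n_pos_def by metis
  then have S_n: "finite S" "S \<subseteq> {..<n}"
    by (auto intro: finite_subset)
  have "measure (T_law n \<theta>) {x \<in> space (T_law n \<theta>). ord_stat n r x < c}
      \<le> (\<Sum>i\<in>S. measure (normal_measure (\<theta> i) 1) {..<c})"
    unfolding T_law_def using ord_stat_less_imp_ex[OF assms(1,2) S_n(2)] S S_n
    by (intro measure_PiM_le_sum_coordinate_events) (auto simp: prob_space_normal_measure)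
  also have "\<dots> \<le> (\<Sum>i\<in>S. 1 - Phi (- c))"
    using S by (intro sum_mono) (auto simp: measure_normal_measure_lessThan intro!: Phi_mono)
  finally show ?thesis
    using S by simp
qed

lemma ord_stat_upper_tail_le:
  assumes "1 \<le> k" "k \<le> n" "k \<le> n_neg n \<theta>"
  shows "measure (T_law n \<theta>) {x \<in> space (T_law n \<theta>). c < ord_stat n k x}
    \<le> real k * (1 - Phi c)"
proof -
  obtain S where S: "S \<subseteq> {i. i < n \<and> \<theta> i < 0}" "card S = k"
    using assms(3) obtain_subset_with_card_n unfolding n_neg_def by metis
  then have S_n: "finite S" "S \<subseteq> {..<n}"
    by (auto intro: finite_subset)
  have "measure (T_law n \<theta>) {x \<in> space (T_law n \<theta>). c < ord_stat n k x}
      \<le> (\<Sum>i\<in>S. measure (normal_measure (\<theta> i) 1) {c<..})"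
    unfolding T_law_def using ord_stat_greater_imp_ex[OF assms(1,2) S_n(2)] S S_n
    by (intro measure_PiM_le_sum_coordinate_events) (auto simp: prob_space_normal_measure)
  also have "\<dots> \<le> (\<Sum>i\<in>S. 1 - Phi c)"
    using S by (intro sum_mono) (auto simp: measure_normal_measure_greaterThan intro!: Phi_mono)
  finally show ?thesis
    using S by simp
qed

theorem proposition2:
  fixes n r :: nat and \<alpha> t :: real
  assumes "n \<ge> 1"
    and "(real n + 1) / 2 < real r" and "r \<le> n"
    and "0 < \<alpha>" and "\<alpha> < 1/2"
    and "t = Phi_inv (1 - \<alpha> / real (n - r + 1))"
  shows "(\<forall>\<theta> :: nat \<Rightarrow> real. n_pos n \<theta> \<ge> r \<longrightarrow>
            measure (T_law n \<theta>) {x \<in> space (T_law n \<theta>). ord_stat n r x < - t} \<le> \<alpha>)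
       \<and> (\<forall>\<theta> :: nat \<Rightarrow> real. n_neg n \<theta> \<ge> r \<longrightarrow>
            measure (T_law n \<theta>) {x \<in> space (T_law n \<theta>). ord_stat n (n - r + 1) x > t} \<le> \<alpha>)"
proof -
  define k where "k = n - r + 1"
  have "n + 1 < 2 * r"
    using assms(2) by (simp add: field_simps)
  then have r: "1 \<le> r" "k \<le> r" "1 \<le> k" "k \<le> n"
    using assms(3) unfolding k_def by linarith+
  have "1 - Phi t = \<alpha> / k"
    using Phi_Phi_inv[of "1 - \<alpha> / k"] assms(4-6) r(3)
    unfolding k_def by (simp add: field_simps)
  then have tail: "real k * (1 - Phi t) = \<alpha>"
    using r(3) by simp
  show ?thesis
    using ord_stat_lower_tail_le[OF r(1) assms(3), of _ "- t"]
      ord_stat_upper_tail_le[OF r(3,4), of _ t] r(2) tail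
    unfolding k_def by force
qed

end
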